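(* Let $D_{m,n}:=(K+1)(m+n)$ and, for a constant $B>0$ and $\epsilon>0$, define the sieve $$\mathcal{H}_{m,n}(\epsilon):=\big\{\vartheta\in\mathcal{H}_{m,n}:\ e^{-B\epsilon^2/\bar\lambda_{m,n}}\le z_\ell\le e^{B\epsilon^2/\bar\lambda_{m,n}}\ \text{for all coordinates } \ell=1,\dots,D_{m,n}\big\}.$$ There exist constants $A,B,C_s>0$ such that whenever $\epsilon^2\ge A K(m\vee n)\bar\lambda_{m,n}L_{m,n}$, $$\Pi_{\mathrm{fac}}\big(\mathcal{H}_{m,n}(\epsilon)^c\big)\le\exp\big(-C_s\,\epsilon^2/\bar\lambda_{m,n}\big).$$
   Context: $n,m,K$ positive integers; $\bar\lambda_{m,n}\in(0,1/2]$; $L_{m,n}:=\log(m+n)+\log(1/\bar\lambda_{m,n})$. Factor space $\mathcal{H}_{m,n}:=\mathbb{R}_+^n\times\mathbb{R}_+^m\times\mathbb{R}_+^{n\times K}\times\mathbb{R}_+^{m\times K}$, with elements $\vartheta=(\alpha,\rho,\Theta,B)$ whose $D_{m,n}=(K+1)(m+n)$ scalar coordinates are denoted $z_\ell$. The prior $\Pi_{\mathrm{fac}}$ makes all coordinates independent with Gamma distributions: $\alpha_i\sim\Gamma(a_\alpha,b_\alpha)$, $\rho_j\sim\Gamma(a_\rho,b_\rho)$, $\Theta_{ik}\sim\Gamma(a_\theta,b_\theta)$, $B_{jk}\sim\Gamma(a_\beta,b_\beta)$ with fixed positive shape and rate hyperparameters. *)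

theory Defs
  imports "HOL-Probability.Probability"
begin

text \<open>Coordinates of the factor space: alpha_i (i<n), rho_j (j<m),
  Theta_ik (i<n, k<K), B_jk (j<m, k<K).\<close>
datatype fcoord = CAlpha nat | CRho nat | CTheta nat nat | CBeta nat nat

definition fac_coords :: "nat \<Rightarrow> nat \<Rightarrow> nat \<Rightarrow> fcoord set" where
  "fac_coords n m K =
     CAlpha ` {..<n} \<union> CRho ` {..<m}
     \<union> {CTheta i k | i k. i < n \<and> k < K} \<union> {CBeta j k | j k. j < m \<and> k < K}"

definition gamma_density :: "real \<Rightarrow> real \<Rightarrow> real \<Rightarrow> real" where
  "gamma_density a b x =
     (if x > 0 then b powr a * x powr (a - 1) * exp (- b * x) / Gamma a else 0)"

definition gamma_measure :: "real \<Rightarrow> real \<Rightarrow> real measure" where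
  "gamma_measure a b = density lborel (\<lambda>x. ennreal (gamma_density a b x))"

text \<open>Shape and rate of each coordinate, given hyperparameters
  (a_alpha,b_alpha,a_rho,b_rho,a_theta,b_theta,a_beta,b_beta).\<close>
fun coord_shape :: "real \<Rightarrow> real \<Rightarrow> real \<Rightarrow> real \<Rightarrow> fcoord \<Rightarrow> real" where
  "coord_shape aa ar ath ab (CAlpha _) = aa"
| "coord_shape aa ar ath ab (CRho _) = ar"
| "coord_shape aa ar ath ab (CTheta _ _) = ath"
| "coord_shape aa ar ath ab (CBeta _ _) = ab"

definition prior_fac ::
  "real \<Rightarrow> real \<Rightarrow> real \<Rightarrow> real \<Rightarrow> real \<Rightarrow> real \<Rightarrow> real \<Rightarrow> real \<Rightarrow>
   nat \<Rightarrow> nat \<Rightarrow> nat \<Rightarrow> (fcoord \<Rightarrow> real) measure" where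
  "prior_fac aa ba ar br ath bth ab bb n m K =
     PiM (fac_coords n m K)
       (\<lambda>l. gamma_measure (coord_shape aa ar ath ab l) (coord_shape ba br bth bb l))"

definition fac_sieve ::
  "nat \<Rightarrow> nat \<Rightarrow> nat \<Rightarrow> real \<Rightarrow> real \<Rightarrow> real \<Rightarrow> (fcoord \<Rightarrow> real) set" where
  "fac_sieve n m K B lam eps =
     {\<theta> \<in> PiE (fac_coords n m K) (\<lambda>_. UNIV).
        \<forall>l \<in> fac_coords n m K.
          exp (- B * eps\<^sup>2 / lam) \<le> \<theta> l \<and> \<theta> l \<le> exp (B * eps\<^sup>2 / lam)}"

definition L_mn :: "nat \<Rightarrow> nat \<Rightarrow> real \<Rightarrow> real" where
  "L_mn m n lam = ln (real (m + n)) + ln (1 / lam)"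

end

theory Submission
  imports Defs
begin

text \<open>
  A Gamma(a, b) coordinate leaves the band [exp (-t), exp t] with probability O(exp (-c t)),
  c = min (a/2) 1: below d its density is at most a multiple of d^(a/2) times the Gamma(a/2, b)
  density, and above R at most a/(bR) times the Gamma(a+1, b) density. Only four parameter pairs
  occur, so c and the constant C can be taken uniform over the coordinates. A union bound over the
  (K+1)(m+n) <= 4u coordinates, where u = eps^2/lam >= K max(m, n), bounds the prior mass outside
  the sieve by 4u C exp (-c B u), and this is at most exp (-u) once c B = 2 + ln (4C).
\<close>

lemma borel_measurable_gamma_density [measurable]: "gamma_density a b \<in> borel_measurable borel"
  unfolding gamma_density_def by measurable

lemma gamma_density_nonneg: "0 < a \<Longrightarrow> 0 \<le> gamma_density a b x"
  unfolding gamma_density_def by auto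

lemma nn_integral_gamma_density:
  assumes a: "0 < a" and b: "0 < b"
  shows "(\<integral>\<^sup>+x. ennreal (gamma_density a b x) \<partial>lborel) = 1"
proof -
  let ?f = "\<lambda>t. ennreal (if t > 0 then t powr (a - 1) * exp (- t) / Gamma a else 0)"
  have "Gamma a \<noteq> 0"
    using a by (metis Gamma_real_pos less_irrefl)
  then have "((\<lambda>t. t powr (a - 1) / exp t / Gamma a) has_integral 1) {0..}"
    using has_integral_divide[OF Gamma_integral_real[OF a], of "Gamma a"] by simp
  then have "1 = (\<integral>\<^sup>+t. ennreal (t powr (a - 1) / exp t / Gamma a) * indicator {0..} t \<partial>lborel)"
    using a by (subst nn_integral_has_integral_lebesgue') auto
  also have "\<dots> = (\<integral>\<^sup>+t. ?f t \<partial>lborel)"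
    by (rule nn_integral_cong) (auto simp: indicator_def exp_minus field_simps)
  also have "\<dots> = ennreal \<bar>b\<bar> * (\<integral>\<^sup>+x. ?f (0 + b * x) \<partial>lborel)"
    using b by (intro nn_integral_real_affine) auto
  also have "\<dots> = ennreal b * (\<integral>\<^sup>+x. ?f (b * x) \<partial>lborel)"
    using b by (simp only: add_0_left abs_of_pos)
  also have "\<dots> = (\<integral>\<^sup>+x. ennreal (gamma_density a b x) \<partial>lborel)"
  proof (subst nn_integral_cmult[symmetric], simp, rule nn_integral_cong)
    fix x :: real
    show "ennreal b * ?f (b * x) = ennreal (gamma_density a b x)"
    proof (cases "0 < x")
      case True
      then have "b * ((b * x) powr (a - 1) * exp (- (b * x)) / Gamma a) = gamma_density a b x"
        using b by (simp add: gamma_density_def powr_mult powr_diff field_simps)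
      then show ?thesis
        using b True by (simp add: ennreal_mult'[symmetric])
    qed (use b in \<open>simp add: gamma_density_def zero_less_mult_iff\<close>)
  qed
  finally show ?thesis
    by simp
qed

lemma prob_space_gamma_measure: "0 < a \<Longrightarrow> 0 < b \<Longrightarrow> prob_space (gamma_measure a b)"
  by (rule prob_spaceI) (simp add: gamma_measure_def emeasure_density nn_integral_gamma_density)

lemma sets_gamma_measure [measurable_cong]: "sets (gamma_measure a b) = sets borel"
  by (simp add: gamma_measure_def)

lemma gamma_density_le_half_shape:
  assumes a: "0 < a" and x: "x \<le> d"
  shows "gamma_density a b x
    \<le> b powr (a/2) * Gamma (a/2) / Gamma a * d powr (a/2) * gamma_density (a/2) b x"
proof (cases "0 < x")
  case True
  have "x powr (a - 1) = x powr (a/2) * x powr (a/2 - 1)"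
       "b powr a = b powr (a/2) * b powr (a/2)"
    by (simp_all add: powr_add[symmetric])
  then have "gamma_density a b x
      = b powr (a/2) * Gamma (a/2) / Gamma a * x powr (a/2) * gamma_density (a/2) b x"
    using True a Gamma_real_pos[of a] Gamma_real_pos[of "a/2"]
    by (simp add: gamma_density_def field_simps del: Gamma_real_pos)
  also have "\<dots> \<le> b powr (a/2) * Gamma (a/2) / Gamma a * d powr (a/2) * gamma_density (a/2) b x"
    using True x a by (intro mult_right_mono mult_left_mono powr_mono2 gamma_density_nonneg) auto
  finally show ?thesis .
qed (simp add: gamma_density_def)

lemma gamma_density_le_succ_shape:
  assumes a: "0 < a" and b: "0 < b" and R: "0 < R" "R \<le> x"
  shows "gamma_density a b x \<le> a / (b * R) * gamma_density (a + 1) b x"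
proof -
  have x: "0 < x" using R by linarith
  have "Gamma (a + 1) = a * Gamma a"
    using a Gamma_plus1[of a] nonpos_Ints_nonpos[of a] by fastforce
  moreover have "x powr a = x * x powr (a - 1)" "b powr (a + 1) = b * b powr a"
    using x b by (simp_all add: powr_add powr_diff)
  moreover have "x powr (a - 1) \<le> x / R * x powr (a - 1)"
    using R by (simp add: mult_le_cancel_right1 field_simps)
  ultimately show ?thesis
    using x a b R by (simp add: gamma_density_def field_simps mult_right_mono)
qed

lemma emeasure_density_le_of_dominated:
  assumes [measurable]: "f \<in> borel_measurable M" "g \<in> borel_measurable M" "S \<in> sets M"
    and g: "(\<integral>\<^sup>+x. ennreal (g x) \<partial>M) \<le> 1" and c: "0 \<le> c"
    and dom: "\<And>x. x \<in> S \<Longrightarrow> f x \<le> c * g x"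
  shows "emeasure (density M (\<lambda>x. ennreal (f x))) S \<le> ennreal c"
proof -
  have "emeasure (density M (\<lambda>x. ennreal (f x))) S = (\<integral>\<^sup>+x. ennreal (f x) * indicator S x \<partial>M)"
    by (simp add: emeasure_density)
  also have "\<dots> \<le> (\<integral>\<^sup>+x. ennreal c * ennreal (g x) \<partial>M)"
    using dom c by (intro nn_integral_mono) (auto simp: indicator_def ennreal_mult'[symmetric] ennreal_leI)
  also have "\<dots> \<le> ennreal c"
    using mult_left_mono[OF g] by (simp add: nn_integral_cmult)
  finally show ?thesis .
qed

lemma measure_gamma_lower_tail:
  assumes "0 < a" "0 < b"
  shows "measure (gamma_measure a b) {..<d} \<le> b powr (a/2) * Gamma (a/2) / Gamma a * d powr (a/2)"
proof -
  have "gamma_density a b x \<le> b powr (a/2) * Gamma (a/2) / Gamma a * d powr (a/2) * gamma_density (a/2) b x"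
    if "x \<in> {..<d}" for x
    using gamma_density_le_half_shape[OF assms(1)] that by simp
  then have "emeasure (gamma_measure a b) {..<d}
      \<le> ennreal (b powr (a/2) * Gamma (a/2) / Gamma a * d powr (a/2))"
    unfolding gamma_measure_def using assms
    by (intro emeasure_density_le_of_dominated) (auto simp: nn_integral_gamma_density)
  then show ?thesis
    using assms by (auto simp: measure_def intro!: enn2real_leI)
qed

lemma measure_gamma_upper_tail:
  assumes "0 < a" "0 < b" "0 < R"
  shows "measure (gamma_measure a b) {R<..} \<le> a / (b * R)"
proof -
  have "gamma_density a b x \<le> a / (b * R) * gamma_density (a + 1) b x" if "x \<in> {R<..}" for x
    using gamma_density_le_succ_shape[OF assms] that by simp
  then have "emeasure (gamma_measure a b) {R<..} \<le> ennreal (a / (b * R))"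
    unfolding gamma_measure_def using assms
    by (intro emeasure_density_le_of_dominated) (auto simp: nn_integral_gamma_density)
  then show ?thesis
    using assms by (auto simp: measure_def intro!: enn2real_leI)
qed

lemma gamma_two_sided_tail_exponential:
  assumes a: "0 < a" and b: "0 < b"
  shows "\<exists>c>0. \<exists>C. \<forall>t\<ge>0.
    measure (gamma_measure a b) {x. x < exp (- t) \<or> exp t < x} \<le> C * exp (- c * t)"
proof -
  define c where "c = min (a/2) 1"
  define C0 where "C0 = b powr (a/2) * Gamma (a/2) / Gamma a"
  have C0: "0 \<le> C0"
    unfolding C0_def using a by auto
  have "measure (gamma_measure a b) {x. x < exp (- t) \<or> exp t < x} \<le> (C0 + a / b) * exp (- c * t)"
    if t: "0 \<le> t" for t
  proof -
    have "{x. x < exp (- t) \<or> exp t < x} = {..<exp (- t)} \<union> {exp t<..}"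
      by auto
    then have "measure (gamma_measure a b) {x. x < exp (- t) \<or> exp t < x}
        \<le> measure (gamma_measure a b) {..<exp (- t)} + measure (gamma_measure a b) {exp t<..}"
      by (simp add: measure_Un_le)
    also have "\<dots> \<le> C0 * exp (- t) powr (a/2) + a / (b * exp t)"
      unfolding C0_def using a b
      by (intro add_mono measure_gamma_lower_tail measure_gamma_upper_tail) auto
    also have "\<dots> = C0 * exp (- (a/2) * t) + a / b * exp (- t)"
      by (simp add: powr_def) (simp add: exp_minus field_simps)
    also have "\<dots> \<le> C0 * exp (- c * t) + a / b * exp (- c * t)"
      using mult_right_mono[OF min.cobounded1[of "a/2" 1] t] mult_right_mono[OF min.cobounded2[of "a/2" 1] t]
      unfolding c_def using a b C0 by (intro add_mono mult_left_mono) auto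
    finally show ?thesis
      by (simp add: distrib_right)
  qed
  moreover have "0 < c"
    unfolding c_def using a by simp
  ultimately show ?thesis
    by blast
qed

lemma finite_exponential_bounds_uniform:
  fixes f :: "'p \<Rightarrow> real \<Rightarrow> real"
  assumes "finite P" and "\<And>p. p \<in> P \<Longrightarrow> \<exists>c>0. \<exists>C. \<forall>t\<ge>0. f p t \<le> C * exp (- c * t)"
  shows "\<exists>c>0. \<exists>C\<ge>1. \<forall>p\<in>P. \<forall>t\<ge>0. f p t \<le> C * exp (- c * t)"
  using assms
proof (induction P rule: finite_induct)
  case empty
  show ?case
    by (intro exI[of _ 1]) auto
next
  case (insert q P)
  obtain c C where c: "0 < c" "1 \<le> C" and P: "\<forall>p\<in>P. \<forall>t\<ge>0. f p t \<le> C * exp (- c * t)"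
    using insert by auto
  obtain c' C' where c': "0 < c'" and q: "\<forall>t\<ge>0. f q t \<le> C' * exp (- c' * t)"
    using insert.prems[of q] by auto
  have weaken: "D * exp (- e * t) \<le> max C C' * exp (- min c c' * t)"
    if "D \<le> max C C'" "min c c' \<le> e" "0 \<le> t" for D e t
  proof -
    have "D * exp (- e * t) \<le> max C C' * exp (- e * t)"
      using that by simp
    also have "\<dots> \<le> max C C' * exp (- min c c' * t)"
      using that c by (intro mult_left_mono) (auto intro: mult_right_mono)
    finally show ?thesis .
  qed
  have "f p t \<le> max C C' * exp (- min c c' * t)" if "p \<in> insert q P" "0 \<le> t" for p t
  proof (cases "p = q")
    case True
    then show ?thesis
      using q that by (intro order_trans[OF _ weaken[of C' c']]) auto
  next
    case False
    then show ?thesis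
      using P that by (intro order_trans[OF _ weaken[of C c]]) auto
  qed
  then show ?case
    using c c' by (intro exI[of _ "min c c'"] exI[of _ "max C C'"] conjI) auto
qed

lemma (in product_prob_space) measure_PiM_exists_component_le:
  assumes "finite I" and A: "\<And>i. i \<in> I \<Longrightarrow> A i \<in> sets (M i)"
  shows "measure (PiM I M) {x \<in> space (PiM I M). \<exists>i\<in>I. x i \<in> A i} \<le> (\<Sum>i\<in>I. measure (M i) (A i))"
proof -
  have "{x \<in> space (PiM I M). \<exists>i\<in>I. x i \<in> A i} = (\<Union>i\<in>I. {x \<in> space (PiM I M). x i \<in> A i})"
    by auto
  also have "measure (PiM I M) \<dots> \<le> (\<Sum>i\<in>I. measure (PiM I M) {x \<in> space (PiM I M). x i \<in> A i})"
    using assms by (intro measure_UNION_le) (auto intro: sets_Collect_single)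
  also have "\<dots> = (\<Sum>i\<in>I. measure (M i) (A i))"
    using A by (intro sum.cong) (simp_all add: measure_def emeasure_PiM_Collect_single)
  finally show ?thesis .
qed

lemma finite_fac_coords: "finite (fac_coords n m K)"
  and card_fac_coords_le: "card (fac_coords n m K) \<le> (K + 1) * (m + n)"
proof -
  have "{CTheta i k | i k. i < n \<and> k < K} = case_prod CTheta ` ({..<n} \<times> {..<K})"
       "{CBeta j k | j k. j < m \<and> k < K} = case_prod CBeta ` ({..<m} \<times> {..<K})"
    by auto
  then have coords: "fac_coords n m K = CAlpha ` {..<n} \<union> CRho ` {..<m}
      \<union> case_prod CTheta ` ({..<n} \<times> {..<K}) \<union> case_prod CBeta ` ({..<m} \<times> {..<K})"
    by (simp add: fac_coords_def)
  show "finite (fac_coords n m K)"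
    unfolding coords by simp
  have "card (fac_coords n m K) \<le> card (CAlpha ` {..<n}) + card (CRho ` {..<m})
      + card (case_prod CTheta ` ({..<n} \<times> {..<K})) + card (case_prod CBeta ` ({..<m} \<times> {..<K}))"
    unfolding coords by (intro order_trans[OF card_Un_le] add_mono le_refl)+
  also have "\<dots> \<le> n + m + n * K + m * K"
    by (intro add_mono order_trans[OF card_image_le]) (auto simp: card_cartesian_product)
  also have "\<dots> = (K + 1) * (m + n)"
    by (simp add: algebra_simps)
  finally show "card (fac_coords n m K) \<le> (K + 1) * (m + n)" .
qed

lemma card_fac_coords_le_max:
  assumes "1 \<le> K"
  shows "real (card (fac_coords n m K)) \<le> 4 * (real K * real (max m n))"
proof -
  have "real (card (fac_coords n m K)) \<le> (real K + 1) * (real m + real n)"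
    using card_fac_coords_le[of n m K] by (metis of_nat_add of_nat_le_iff of_nat_mult of_nat_1)
  also have "\<dots> \<le> (2 * real K) * (2 * real (max m n))"
    using assms by (intro mult_mono) (auto simp: max_def)
  finally show ?thesis
    by simp
qed

lemma prob_space_prior_coordinate:
  assumes "0 < aa" "0 < ba" "0 < ar" "0 < br" "0 < ath" "0 < bth" "0 < ab" "0 < bb"
  shows "prob_space (gamma_measure (coord_shape aa ar ath ab l) (coord_shape ba br bth bb l))"
  using assms by (cases l) (simp_all add: prob_space_gamma_measure)

lemma prior_coordinate_tails_uniform:
  assumes "0 < aa" "0 < ba" "0 < ar" "0 < br" "0 < ath" "0 < bth" "0 < ab" "0 < bb"
  shows "\<exists>c>0. \<exists>C\<ge>1. \<forall>l. \<forall>t\<ge>0.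
    measure (gamma_measure (coord_shape aa ar ath ab l) (coord_shape ba br bth bb l))
      {x. x < exp (- t) \<or> exp t < x} \<le> C * exp (- c * t)"
proof -
  define tail where "tail p t = measure (gamma_measure (fst p) (snd p)) {x. x < exp (- t) \<or> exp t < x}"
    for p :: "real \<times> real" and t
  define P where "P = {(aa, ba), (ar, br), (ath, bth), (ab, bb)}"
  have "\<exists>c>0. \<exists>C. \<forall>t\<ge>0. tail p t \<le> C * exp (- c * t)" if p: "p \<in> P" for p
  proof -
    obtain a b where "p = (a, b)" "0 < a" "0 < b"
      using p assms unfolding P_def by auto
    then show ?thesis
      using gamma_two_sided_tail_exponential[of a b] by (simp add: tail_def)
  qed
  then obtain c C where "0 < c" "1 \<le> C" and tail_P: "\<forall>p\<in>P. \<forall>t\<ge>0. tail p t \<le> C * exp (- c * t)"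
    using finite_exponential_bounds_uniform[of P tail] unfolding P_def by blast
  moreover have "(coord_shape aa ar ath ab l, coord_shape ba br bth bb l) \<in> P" for l
    unfolding P_def by (cases l) simp_all
  ultimately show ?thesis
    unfolding tail_def by fastforce
qed

lemma measure_prior_fac_outside_sieve_le:
  assumes pos: "0 < aa" "0 < ba" "0 < ar" "0 < br" "0 < ath" "0 < bth" "0 < ab" "0 < bb"
    and tail: "\<And>l. l \<in> fac_coords n m K \<Longrightarrow>
      measure (gamma_measure (coord_shape aa ar ath ab l) (coord_shape ba br bth bb l))
        {x. x < exp (- (B * eps\<^sup>2 / lam)) \<or> exp (B * eps\<^sup>2 / lam) < x} \<le> q"
  shows "measure (prior_fac aa ba ar br ath bth ab bb n m K)
      (space (prior_fac aa ba ar br ath bth ab bb n m K) - fac_sieve n m K B lam eps)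
    \<le> real (card (fac_coords n m K)) * q"
proof -
  define I where "I = fac_coords n m K"
  define M where "M l = gamma_measure (coord_shape aa ar ath ab l) (coord_shape ba br bth bb l)" for l
  define S where "S = {x. x < exp (- (B * eps\<^sup>2 / lam)) \<or> exp (B * eps\<^sup>2 / lam) < x}"
  interpret product_prob_space M I
    unfolding M_def using prob_space_prior_coordinate[OF pos]
    by (simp add: product_prob_space_def product_prob_space_axioms_def product_sigma_finite_def
        prob_space_imp_sigma_finite)
  have "space (prior_fac aa ba ar br ath bth ab bb n m K) - fac_sieve n m K B lam eps
      = {x \<in> space (PiM I M). \<exists>l\<in>I. x l \<in> S}"
    by (auto simp: prior_fac_def fac_sieve_def I_def M_def S_def space_PiM gamma_measure_def not_le)
  also have "measure (PiM I M) \<dots> \<le> (\<Sum>l\<in>I. measure (M l) S)"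
    by (intro measure_PiM_exists_component_le) (auto simp: I_def M_def S_def finite_fac_coords)
  also have "\<dots> \<le> card I * q"
    using sum_mono[of I "\<lambda>l. measure (M l) S" "\<lambda>_. q"] tail by (simp add: I_def M_def S_def)
  finally show ?thesis
    by (simp add: prior_fac_def I_def M_def)
qed

lemma L_mn_ge_one:
  assumes "1 \<le> m" "1 \<le> n" "0 < lam" "lam \<le> 1/2"
  shows "1 \<le> L_mn m n lam"
proof -
  have "ln 2 \<le> ln (real (m + n))" "ln 2 \<le> ln (1 / lam)"
    using assms by (simp_all add: field_simps)
  moreover have "1 \<le> ln (4::real)"
    using exp_le by (subst ln_ge_iff) auto
  moreover have "ln (4::real) = ln 2 + ln 2"
    using ln_mult[of 2 2] by simp
  ultimately show ?thesis
    unfolding L_mn_def by linarith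
qed

lemma K_max_le_eps_sq_div:
  assumes "1 \<le> n" "1 \<le> m" "1 \<le> K" "0 < lam" "lam \<le> 1/2"
    and eps: "real K * real (max m n) * lam * L_mn m n lam \<le> eps\<^sup>2"
  shows "1 \<le> real K * real (max m n)" and "real K * real (max m n) \<le> eps\<^sup>2 / lam"
proof -
  show "1 \<le> real K * real (max m n)"
    using mult_mono[of 1 "real K" 1 "real (max m n)"] assms by (simp add: le_max_iff_disj)
  have "real K * real (max m n) * lam * 1 \<le> real K * real (max m n) * lam * L_mn m n lam"
    using L_mn_ge_one[of m n lam] assms by (intro mult_left_mono) auto
  then have "real K * real (max m n) * lam \<le> eps\<^sup>2"
    using eps by simp
  then show "real K * real (max m n) \<le> eps\<^sup>2 / lam"
    using assms by (simp add: field_simps)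
qed

lemma linear_times_exp_le_exp:
  fixes u D C :: real
  assumes u: "1 \<le> u" and D: "D \<le> 4 * u" and C: "1 \<le> C"
  shows "D * (C * exp (- ((2 + ln (4 * C)) * u))) \<le> exp (- u)"
proof -
  define L where "L = ln (4 * C)"
  have L: "0 \<le> L"
    unfolding L_def using C by simp
  have "C * exp (- (L * u)) \<le> C * exp (- L)"
    using L u C by (intro mult_left_mono) (auto intro: mult_left_mono[of 1 u L, simplified])
  also have "\<dots> = 1 / 4"
    unfolding L_def using C by (simp add: exp_minus)
  finally have CL: "C * exp (- (L * u)) \<le> 1 / 4" .
  have "u \<le> exp u"
    using exp_ge_add_one_self[of u] by linarith
  then have ue: "u * exp (- u) \<le> 1"
    by (simp add: exp_minus field_simps)
  have "D * (C * exp (- ((2 + L) * u))) = D * (C * exp (- (L * u))) * exp (- u) * exp (- u)"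
    by (simp add: exp_add[symmetric] algebra_simps)
  also have "\<dots> \<le> (4 * u) * (1 / 4) * exp (- u) * exp (- u)"
    using D CL u C by (intro mult_right_mono mult_mono) auto
  also have "\<dots> = (u * exp (- u)) * exp (- u)"
    by simp
  also have "\<dots> \<le> exp (- u)"
    using ue u by (intro mult_left_le_one_le) auto
  finally show ?thesis
    unfolding L_def .
qed

theorem propositionL5:
  fixes aa ba ar br ath bth ab bb :: real
  assumes "aa > 0" "ba > 0" "ar > 0" "br > 0" "ath > 0" "bth > 0" "ab > 0" "bb > 0"
  shows "\<exists>A B Cs :: real. A > 0 \<and> B > 0 \<and> Cs > 0 \<and>
    (\<forall>(n::nat) (m::nat) (K::nat) (lam::real) (eps::real).
       n \<ge> 1 \<longrightarrow> m \<ge> 1 \<longrightarrow> K \<ge> 1 \<longrightarrow> 0 < lam \<longrightarrow> lam \<le> 1/2 \<longrightarrow> eps > 0 \<longrightarrow>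
       eps\<^sup>2 \<ge> A * real K * real (max m n) * lam * L_mn m n lam \<longrightarrow>
       measure (prior_fac aa ba ar br ath bth ab bb n m K)
         (space (prior_fac aa ba ar br ath bth ab bb n m K) - fac_sieve n m K B lam eps)
       \<le> exp (- Cs * eps\<^sup>2 / lam))"
proof -
  obtain c C where c: "0 < c" and C: "1 \<le> C" and tail: "\<forall>l. \<forall>t\<ge>0.
      measure (gamma_measure (coord_shape aa ar ath ab l) (coord_shape ba br bth bb l))
        {x. x < exp (- t) \<or> exp t < x} \<le> C * exp (- c * t)"
    using prior_coordinate_tails_uniform[OF assms] by blast
  define B where "B = (2 + ln (4 * C)) / c"
  have "measure (prior_fac aa ba ar br ath bth ab bb n m K)
      (space (prior_fac aa ba ar br ath bth ab bb n m K) - fac_sieve n m K B lam eps)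
    \<le> exp (- 1 * eps\<^sup>2 / lam)"
    if "1 \<le> n" "1 \<le> m" "1 \<le> K" "0 < lam" "lam \<le> 1/2"
      and "1 * real K * real (max m n) * lam * L_mn m n lam \<le> eps\<^sup>2" for n m K lam eps
  proof -
    define u where "u = eps\<^sup>2 / lam"
    have "1 \<le> real K * real (max m n)" "real K * real (max m n) \<le> u"
      using K_max_le_eps_sq_div[of n m K lam eps] that unfolding u_def by simp_all
    then have u: "1 \<le> u" "real (card (fac_coords n m K)) \<le> 4 * u"
      using card_fac_coords_le_max[of K n m] that by linarith+
    have "- c * (B * eps\<^sup>2 / lam) = - ((2 + ln (4 * C)) * u)" "0 \<le> B * eps\<^sup>2 / lam"
      unfolding B_def u_def using c C that by simp_all
    then have "measure (prior_fac aa ba ar br ath bth ab bb n m K)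
        (space (prior_fac aa ba ar br ath bth ab bb n m K) - fac_sieve n m K B lam eps)
      \<le> real (card (fac_coords n m K)) * (C * exp (- ((2 + ln (4 * C)) * u)))"
      using tail by (intro measure_prior_fac_outside_sieve_le[OF assms]) metis
    also have "\<dots> \<le> exp (- u)"
      using u C by (rule linear_times_exp_le_exp)
    finally show ?thesis
      unfolding u_def by simp
  qed
  moreover have "0 < B"
    unfolding B_def using c C by (simp add: add_pos_nonneg)
  ultimately show ?thesis
    by (intro exI[of _ 1] exI[of _ B]) auto
qed

end
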